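(* Let $i\geq 1$. For $n\geq 0$, let $T(i,n)$ be the set of pairs $(L_1,L_2)$ of walks of length $n$ with steps $(1,1)$ and $(1,-1)$, where $L_1$ starts at $(0,0)$ and $L_2$ starts at $(0,2i)$, such that $(L_1,L_2)$ is converging, i.e., $L_1$ and $L_2$ share no common point before they reach a common ending point (at $x=n$). Let $T_i(t)=\sum_{n\geq 0}|T(i,n)|t^n$. Let $C(t)=\sum_{n\geq0}\frac{1}{n+1}\binom{2n}{n}t^n$ be the generating function of the Catalan numbers and $D(t)=tC^2(t)$. Then $T_i(t)=D^i(t)$. *)

theory Defs
  imports "HOL-Computational_Algebra.Formal_Power_Series"
begin

text \<open>A walk of length n with steps (1,1) and (1,-1) is encoded by its list of
  vertical steps (each 1 or -1).\<close>
definition step_lists :: "nat \<Rightarrow> int list set" where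
  "step_lists n = {s. length s = n \<and> set s \<subseteq> {1, -1}}"

definition walk_points :: "int \<times> int \<Rightarrow> int list \<Rightarrow> (int \<times> int) set" where
  "walk_points p s = {(fst p + int k, snd p + sum_list (take k s)) | k. k \<le> length s}"

definition walk_end :: "int \<times> int \<Rightarrow> int list \<Rightarrow> int \<times> int" where
  "walk_end p s = (fst p + int (length s), snd p + sum_list s)"

definition converging :: "int \<times> int \<Rightarrow> int list \<Rightarrow> int \<times> int \<Rightarrow> int list \<Rightarrow> bool" where
  "converging p1 s1 p2 s2 \<longleftrightarrow>
     walk_end p1 s1 = walk_end p2 s2 \<and>
     walk_points p1 s1 \<inter> walk_points p2 s2 = {walk_end p1 s1}"

definition T :: "nat \<Rightarrow> nat \<Rightarrow> (int list \<times> int list) set" where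
  "T i n = {(s1, s2). s1 \<in> step_lists n \<and> s2 \<in> step_lists n \<and>
                      converging (0, 0) s1 (0, 2 * int i) s2}"

definition T_gf :: "nat \<Rightarrow> rat fps" where
  "T_gf i = Abs_fps (\<lambda>n. of_nat (card (T i n)))"

definition catalan_gf :: "rat fps" where
  "catalan_gf = Abs_fps (\<lambda>n. of_nat ((2 * n) choose n) / of_nat (n + 1))"

definition D_gf :: "rat fps" where
  "D_gf = fps_X * catalan_gf ^ 2"

end

theory Submission
  imports Defs
begin

text \<open>
  Let c be the height of the second walk minus that of the first. Taking the two walks one step
  at a time, c changes by -2, 0 (in two ways) or +2, starts at 2i, and the pair converges exactly
  when c vanishes for the first time at the last step. So the number p(c, n) of such pairs satisfies
  p(c, n+1) = p(c-2, n) + 2 p(c, n) + p(c+2, n) for c \<noteq> 0. The coefficients of D^j obey the same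
  recursion with c = 2j, since D = t (1 + D)^2 gives D^j = t (D^(j-1) + 2 D^j + D^(j+1)).
  That functional equation is the Catalan equation C = 1 + t C^2, which follows from
  1 - 2tC = sqrt(1 - 4t) by comparing coefficients with the binomial series of exponent 1/2.
\<close>

unbundle fps_syntax

lemma central_binomial_Suc:
  "Suc n * (2 * Suc n choose Suc n) = 2 * (2 * n + 1) * (2 * n choose n)"
proof -
  have "Suc n * (2 * Suc n choose Suc n) = 2 * Suc n * (2 * n + 1 choose n)"
    using Suc_times_binomial[of n "2 * n + 1"] by simp
  also have "(2 * n + 1 choose n) = (2 * n + 1 choose Suc n)"
    using binomial_symmetric[of n "2 * n + 1"] by simp
  also have "2 * Suc n * \<dots> = 2 * (Suc n * (2 * n + 1 choose Suc n))"
    by simp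
  also have "Suc n * (2 * n + 1 choose Suc n) = (2 * n + 1) * (2 * n choose n)"
    using Suc_times_binomial[of n "2 * n"] by simp
  finally show ?thesis by simp
qed

lemma gbinomial_Suc_rec:
  fixes a :: "'a::field_char_0"
  shows "of_nat (Suc k) * (a gchoose Suc k) = (a - of_nat k) * (a gchoose k)"
  by (metis gbinomial_absorption gbinomial_absorb_comp)

lemma half_gbinomial_central_binomial:
  "of_nat (Suc n) * ((-4) ^ Suc n * ((1/2 :: 'a::field_char_0) gchoose Suc n))
     = - 2 * of_nat (2 * n choose n)"
proof (induction n)
  case 0
  then show ?case by simp
next
  case (Suc n)
  let ?g = "\<lambda>k. (-4) ^ k * ((1/2 :: 'a) gchoose k)"
  have "of_nat (Suc (Suc n)) * ?g (Suc (Suc n))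
          = (-4) * (-4) ^ Suc n * (of_nat (Suc (Suc n)) * ((1/2 :: 'a) gchoose Suc (Suc n)))"
    by (simp only: power_Suc mult_ac)
  also have "\<dots> = (-4) * (1/2 - of_nat (Suc n)) * ?g (Suc n)"
    by (simp only: gbinomial_Suc_rec mult_ac)
  also have "\<dots> = 2 * (2 * of_nat n + 1) * ?g (Suc n)"
    by (simp add: algebra_simps)
  finally have rec: "of_nat (Suc (Suc n)) * ?g (Suc (Suc n)) = 2 * (2 * of_nat n + 1) * ?g (Suc n)" .
  have "of_nat (Suc n) * (of_nat (Suc (Suc n)) * ?g (Suc (Suc n)))
          = 2 * (2 * of_nat n + 1) * (of_nat (Suc n) * ?g (Suc n))"
    unfolding rec by (simp only: mult_ac)
  also have "\<dots> = 2 * (2 * of_nat n + 1) * (- 2 * of_nat (2 * n choose n))"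
    unfolding Suc.IH ..
  also have "\<dots> = - 2 * (of_nat (Suc n) * of_nat (2 * Suc n choose Suc n))"
  proof -
    have "of_nat (Suc n) * of_nat (2 * Suc n choose Suc n)
            = (of_nat (2 * (2 * n + 1)) * of_nat (2 * n choose n) :: 'a)"
      by (metis central_binomial_Suc of_nat_mult)
    moreover have "of_nat (2 * (2 * n + 1)) = (2 * (2 * of_nat n + 1) :: 'a)"
      by simp
    ultimately show ?thesis by (simp only: mult_ac)
  qed
  finally have "of_nat (Suc n) * (of_nat (Suc (Suc n)) * ?g (Suc (Suc n)))
                  = of_nat (Suc n) * (- 2 * of_nat (2 * Suc n choose Suc n))"
    by (simp only: mult_ac)
  then show ?case
    by (metis mult_left_cancel of_nat_eq_0_iff nat.distinct(1))
qed

lemma fps_binomial_half_squared: "fps_binomial (1/2 :: 'a::field_char_0) ^ 2 = 1 + fps_X"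
  by (simp add: fps_binomial_power fps_binomial_1)

lemma catalan_gf_sqrt:
  "1 - fps_const 2 * fps_X * catalan_gf = fps_binomial (1/2) oo (fps_const (-4) * fps_X)"
proof (rule fps_ext)
  fix n
  have rhs: "(fps_binomial (1/2) oo (fps_const (-4) * fps_X)) $ n = (-4) ^ n * ((1/2 :: rat) gchoose n)"
    by (simp add: fps_compose_linear)
  show "(1 - fps_const 2 * fps_X * catalan_gf) $ n = (fps_binomial (1/2) oo (fps_const (-4) * fps_X)) $ n"
  proof (cases n)
    case (Suc m)
    have "of_nat (Suc m) * ((-4) ^ Suc m * ((1/2 :: rat) gchoose Suc m)) = - 2 * of_nat (2 * m choose m)"
      by (rule half_gbinomial_central_binomial)
    then have "(-4) ^ Suc m * ((1/2 :: rat) gchoose Suc m) = - 2 * (of_nat (2 * m choose m) / of_nat (Suc m))"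
      by (simp add: field_simps del: of_nat_Suc)
    then show ?thesis
      by (simp add: rhs Suc catalan_gf_def mult.assoc)
  qed (simp add: rhs)
qed

lemma catalan_gf_equation: "catalan_gf = 1 + fps_X * catalan_gf ^ 2"
proof -
  let ?C = catalan_gf and ?X = "fps_X :: rat fps"
  have "(1 - fps_const 2 * ?X * ?C) ^ 2 = fps_binomial (1/2) ^ 2 oo (fps_const (-4) * ?X)"
    unfolding catalan_gf_sqrt by (rule fps_compose_power) simp
  also have "\<dots> = 1 - fps_const 4 * ?X"
    by (auto simp add: fps_binomial_half_squared fps_eq_iff fps_compose_linear le_Suc_eq)
  finally have "fps_const 4 * ?X * (?X * ?C ^ 2 - ?C + 1) = 0"
    by (simp add: power2_eq_square algebra_simps fps_numeral_fps_const[symmetric])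
  then have "?X * ?C ^ 2 - ?C + 1 = 0"
    by (simp add: fps_numeral_fps_const[symmetric])
  then show ?thesis
    by (simp add: algebra_simps)
qed

lemma D_gf_equation: "D_gf = fps_X * (1 + D_gf) ^ 2"
  using catalan_gf_equation by (simp add: D_gf_def)

definition gap_vanishes_only_at_end :: "int \<Rightarrow> int list \<Rightarrow> int list \<Rightarrow> bool" where
  "gap_vanishes_only_at_end c s1 s2 \<longleftrightarrow>
     (\<forall>k \<le> length s1. (c + sum_list (take k s2) - sum_list (take k s1) = 0) = (k = length s1))"

lemma walk_points_inter:
  assumes "length s1 = length s2"
  shows "walk_points (x, a) s1 \<inter> walk_points (x, b) s2 =
           (\<lambda>k. (x + int k, a + sum_list (take k s1))) `
             {k. k \<le> length s1 \<and> (b - a) + sum_list (take k s2) - sum_list (take k s1) = 0}"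
  using assms by (auto simp: walk_points_def)

lemma converging_iff_gap_vanishes_only_at_end:
  assumes "length s1 = length s2"
  shows "converging (x, a) s1 (x, b) s2 \<longleftrightarrow> gap_vanishes_only_at_end (b - a) s1 s2"
proof -
  let ?pt = "\<lambda>k. (x + int k, a + sum_list (take k s1))"
  let ?Z = "{k. k \<le> length s1 \<and> (b - a) + sum_list (take k s2) - sum_list (take k s1) = 0}"
  have end1: "walk_end (x, a) s1 = ?pt (length s1)"
    by (simp add: walk_end_def)
  have ends: "walk_end (x, a) s1 = walk_end (x, b) s2 \<longleftrightarrow> length s1 \<in> ?Z"
    using assms by (auto simp: walk_end_def)
  have "converging (x, a) s1 (x, b) s2 \<longleftrightarrow> length s1 \<in> ?Z \<and> ?pt ` ?Z = {?pt (length s1)}"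
    unfolding converging_def walk_points_inter[OF assms] ends by (simp only: end1)
  also have "\<dots> \<longleftrightarrow> ?Z = {length s1}"
  proof
    assume "length s1 \<in> ?Z \<and> ?pt ` ?Z = {?pt (length s1)}"
    then have "?pt ` ?Z = ?pt ` {length s1}"
      by simp
    moreover have "inj ?pt"
      by (auto simp: inj_def)
    ultimately show "?Z = {length s1}"
      by (simp only: inj_image_eq_iff)
  qed simp
  also have "\<dots> \<longleftrightarrow> gap_vanishes_only_at_end (b - a) s1 s2"
    by (auto simp: gap_vanishes_only_at_end_def)
  finally show ?thesis .
qed

lemma gap_vanishes_only_at_end_Nil: "gap_vanishes_only_at_end c [] [] \<longleftrightarrow> c = 0"
  by (simp add: gap_vanishes_only_at_end_def)

lemma gap_vanishes_only_at_end_Cons: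
  "gap_vanishes_only_at_end c (a # r1) (b # r2) \<longleftrightarrow> c \<noteq> 0 \<and> gap_vanishes_only_at_end (c + b - a) r1 r2"
proof -
  have all_le_Suc: "(\<forall>k \<le> Suc L. P k) \<longleftrightarrow> P 0 \<and> (\<forall>j \<le> L. P (Suc j))" for L and P :: "nat \<Rightarrow> bool"
    by (metis Suc_le_mono le0 not0_implies_Suc)
  show ?thesis
    unfolding gap_vanishes_only_at_end_def length_Cons all_le_Suc
    by (simp add: algebra_simps)
qed

definition gap_pairs :: "int \<Rightarrow> nat \<Rightarrow> (int list \<times> int list) set" where
  "gap_pairs c n = {(s1, s2). s1 \<in> step_lists n \<and> s2 \<in> step_lists n \<and> gap_vanishes_only_at_end c s1 s2}"

fun gap_count :: "int \<Rightarrow> nat \<Rightarrow> nat" where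
  "gap_count c 0 = (if c = 0 then 1 else 0)"
| "gap_count c (Suc n) =
     (if c = 0 then 0 else gap_count (c - 2) n + 2 * gap_count c n + gap_count (c + 2) n)"

lemma step_lists_Suc:
  "s \<in> step_lists (Suc n) \<longleftrightarrow> (\<exists>a r. s = a # r \<and> a \<in> {1, -1} \<and> r \<in> step_lists n)"
  by (cases s) (auto simp: step_lists_def)

lemma gap_pairs_0: "gap_pairs c 0 = (if c = 0 then {([], [])} else {})"
  by (auto simp: gap_pairs_def step_lists_def gap_vanishes_only_at_end_Nil)

lemma gap_pairs_Suc_zero: "gap_pairs 0 (Suc n) = {}"
  by (auto simp: gap_pairs_def step_lists_Suc gap_vanishes_only_at_end_Cons)

definition cons2 :: "int \<Rightarrow> int \<Rightarrow> int list \<times> int list \<Rightarrow> int list \<times> int list" where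
  "cons2 a b = (\<lambda>(r1, r2). (a # r1, b # r2))"

lemma gap_pairs_Suc:
  assumes "c \<noteq> 0"
  shows "gap_pairs c (Suc n) =
           cons2 1 (-1) ` gap_pairs (c - 2) n \<union> cons2 1 1 ` gap_pairs c n \<union>
           cons2 (-1) (-1) ` gap_pairs c n \<union> cons2 (-1) 1 ` gap_pairs (c + 2) n"
  using assms
  by (fastforce simp: gap_pairs_def step_lists_Suc gap_vanishes_only_at_end_Cons cons2_def image_iff
      add.commute)

lemma card_gap_pairs: "finite (gap_pairs c n) \<and> card (gap_pairs c n) = gap_count c n"
proof (induction n arbitrary: c)
  case 0
  then show ?case by (simp add: gap_pairs_0)
next
  case (Suc n)
  show ?case
  proof (cases "c = 0")
    case True
    then show ?thesis by (simp add: gap_pairs_Suc_zero)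
  next
    case False
    have "inj (cons2 a b)" for a b
      by (auto simp: inj_def cons2_def)
    then have card_cons2: "card (cons2 a b ` gap_pairs d n) = gap_count d n" for a b d
      using Suc.IH by (metis card_image inj_on_subset subset_UNIV)
    have fin: "finite (gap_pairs d n)" for d
      using Suc.IH by blast
    have disjoint: "cons2 a b ` A \<inter> cons2 a' b' ` B = {}" if "(a, b) \<noteq> (a', b')" for a b a' b' A B
      using that by (auto simp: cons2_def)
    show ?thesis
      unfolding gap_pairs_Suc[OF False] using fin
      by (simp add: card_Un_disjoint card_cons2 Int_Un_distrib2 disjoint False)
  qed
qed

lemma fps_nth_power_eq_gap_count:
  fixes F :: "'a::comm_ring_1 fps"
  assumes F0: "F $ 0 = 0" and F_eq: "F = fps_X * (1 + F) ^ 2"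
  shows "(F ^ j) $ n = of_nat (gap_count (2 * int j) n)"
proof (induction n arbitrary: j)
  case 0
  then show ?case
    by (cases j) (simp_all add: fps_nth_power_0 F0)
next
  case (Suc n)
  show ?case
  proof (cases j)
    case 0
    then show ?thesis by simp
  next
    case (Suc k)
    have "F ^ Suc k = F ^ k * (fps_X * (1 + F) ^ 2)"
      by (metis F_eq power_Suc2)
    also have "\<dots> = fps_X * (F ^ k + 2 * F ^ Suc k + F ^ Suc (Suc k))"
      by (simp add: power2_eq_square algebra_simps)
    finally have "(F ^ j) $ Suc n = (fps_X * (F ^ k + 2 * F ^ Suc k + F ^ Suc (Suc k))) $ Suc n"
      by (simp only: \<open>j = Suc k\<close>)
    also have "\<dots> = (F ^ k) $ n + 2 * (F ^ Suc k) $ n + (F ^ Suc (Suc k)) $ n"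
      by (simp add: fps_X_mult_nth fps_numeral_fps_const del: power_Suc)
    also have "\<dots> = of_nat (gap_count (2 * int j) (Suc n))"
      by (simp add: Suc.IH \<open>j = Suc k\<close> algebra_simps del: power_Suc)
    finally show ?thesis .
  qed
qed

theorem proposition3p3:
  fixes i :: nat
  assumes "i \<ge> 1"
  shows "T_gf i = D_gf ^ i"
proof (rule fps_ext)
  fix n
  have "T i n = gap_pairs (2 * int i) n"
    using converging_iff_gap_vanishes_only_at_end[of _ _ 0 0 "2 * int i"]
    by (auto simp: T_def gap_pairs_def step_lists_def)
  then have "card (T i n) = gap_count (2 * int i) n"
    using card_gap_pairs by simp
  moreover have "(D_gf ^ i) $ n = of_nat (gap_count (2 * int i) n)"
    by (rule fps_nth_power_eq_gap_count) (simp add: D_gf_def, rule D_gf_equation)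
  ultimately show "T_gf i $ n = (D_gf ^ i) $ n"
    by (simp add: T_gf_def)
qed

end
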